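(* Let $\mathcal X$ be a separable Hilbert space, $a:\mathcal X\times\mathcal X\to\mathbb R$ a bounded bilinear form with $\inf_{x\neq0}a(x,x)/\|x\|_{\mathcal X}^2=c_0>0$, $f\in\mathcal X^*$, and let $u\in\mathcal X$ solve $a(u,v)=f(v)$ for all $v\in\mathcal X$. Let $(w_n)_{n\in\mathbb N}$ be a Riesz basis of $\mathcal X$ with a constant $C>0$ such that every $x=\sum_n\lambda_nw_n\in\mathcal X$ satisfies $C^{-1}\|x\|_{\mathcal X}^2\le\sum_n\lambda_n^2\le C\|x\|_{\mathcal X}^2$, and let $\mathcal X_\ell={\rm span}\{w_1,\dots,w_{N_\ell}\}$ for integers $N_\ell<N_{\ell+1}$; let $u_\ell\in\mathcal X_\ell$ solve $a(u_\ell,v)=f(v)$ for all $v\in\mathcal X_\ell$. If the matrix $M_{ij}:=a(w_j,w_i)$ belongs to the Jaffard class $\mathcal J$, then there exists $C_{\rm qo}>0$ with \[ C_{\rm qo}^{-1}\|u-u_\ell\|_{\mathcal X}^2\le\sum_{k=\ell}^\infty\|u_{k+1}-u_k\|_{\mathcal X}^2\le C_{\rm qo}\|u-u_\ell\|_{\mathcal X}^2\quad\text{for all }\ell\in\mathbb N. \] The constant $C_{\rm qo}$ depends only on $(w_n)$, $a$, $C$, $c_0$, the Jaffard class and $\mathcal X$.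
   Context: $M\in\mathcal J$ means there exist a metric $d$ on $\mathbb N$ with $\sup_i\sum_j\exp(-\varepsilon d(i,j))<\infty$ for all $\varepsilon>0$, and $\gamma>0$, such that for every $0<\gamma'<\gamma$ there is $C(\gamma')$ with $|M_{ij}|\le C(\gamma')\exp(-\gamma'd(i,j))$ for all $i,j$. *)

theory Defs
  imports "HOL-Analysis.Analysis"
begin

definition riesz_basis :: "(nat \<Rightarrow> 'a::real_normed_vector) \<Rightarrow> real \<Rightarrow> bool" where
  "riesz_basis w C \<longleftrightarrow> C > 0 \<and>
     (\<forall>x. \<exists>lam. (\<lambda>n. lam n *\<^sub>R w n) sums x) \<and>
     (\<forall>x lam. (\<lambda>n. lam n *\<^sub>R w n) sums x \<longrightarrow>
        summable (\<lambda>n. (lam n)\<^sup>2) \<and>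
        (1 / C) * (norm x)\<^sup>2 \<le> (\<Sum>n. (lam n)\<^sup>2) \<and>
        (\<Sum>n. (lam n)\<^sup>2) \<le> C * (norm x)\<^sup>2)"

definition nat_metric :: "(nat \<Rightarrow> nat \<Rightarrow> real) \<Rightarrow> bool" where
  "nat_metric d \<longleftrightarrow> (\<forall>i j. 0 \<le> d i j) \<and> (\<forall>i j. d i j = 0 \<longleftrightarrow> i = j) \<and>
     (\<forall>i j. d i j = d j i) \<and> (\<forall>i j k. d i k \<le> d i j + d j k)"

definition jaffard_class :: "(nat \<Rightarrow> nat \<Rightarrow> real) set" where
  "jaffard_class = {M. \<exists>d. nat_metric d \<and>
     (\<forall>\<epsilon>>0. (\<forall>i. summable (\<lambda>j. exp (- \<epsilon> * d i j))) \<and>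
              (\<exists>B. \<forall>i. (\<Sum>j. exp (- \<epsilon> * d i j)) \<le> B)) \<and>
     (\<exists>\<gamma>>0. \<forall>\<gamma>'. 0 < \<gamma>' \<and> \<gamma>' < \<gamma> \<longrightarrow>
        (\<exists>Cg. \<forall>i j. \<bar>M i j\<bar> \<le> Cg * exp (- \<gamma>' * d i j)))}"

end

theory Submission
  imports Defs
begin

(* For every n let v_n in X_(n+1) be a-orthogonal to X_n with a(v_n, w_n) = 1, and let v'_n be
   the same object for the adjoint form. Then a(v_m, v'_n) = rho_n if m = n and 0 otherwise, with
   rho_n bounded below, so every z in X_N that is a-orthogonal to X_P expands as
   z = sum over P <= n < N of (a(z, v'_n) / rho_n) v_n.
   Following Jaffard, conjugating the Gram matrix by the weights exp(delta d(n, i)) keeps it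
   coercive for small delta; hence the coefficients of v_n in the basis w decay like
   exp(-delta d(i, n)), and Schur's test gives an upper Riesz bound for (v_n) and a Bessel bound
   for the functionals a(., v'_n). The Galerkin increment u_(k+1) - u_k is exactly the block
   N_k <= n < N_(k+1) of the expansion of u, with coefficients a(u, v'_n) / rho_n independent of
   k, and u - u_l is the tail from N_l on. Both inequalities follow, the lower one after passing
   to the limit u_k -> u given by Cea's lemma. *)

lemma exp_mult_exp_minus_one_le:
  fixes t \<delta> \<gamma> :: real
  assumes t: "0 \<le> t" and \<delta>: "0 < \<delta>" "\<delta> \<le> \<gamma> / 2"
  shows "exp (- \<gamma> * t) * (exp (\<delta> * t) - 1) \<le> \<delta> * (4 / \<gamma>) * exp (- (\<gamma> / 4) * t)"
proof -
  have \<gamma>: "\<gamma> > 0" using \<delta> by linarith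
  have "exp (\<delta> * t) - 1 \<le> \<delta> * t * exp (\<delta> * t)"
  proof -
    have "(1 - \<delta> * t) * exp (\<delta> * t) \<le> exp (- (\<delta> * t)) * exp (\<delta> * t)"
      using exp_ge_add_one_self[of "- (\<delta> * t)"] by (intro mult_right_mono) auto
    then show ?thesis by (simp add: algebra_simps flip: exp_add)
  qed
  then have "exp (- \<gamma> * t) * (exp (\<delta> * t) - 1) \<le> exp (- \<gamma> * t) * (\<delta> * t * exp (\<delta> * t))"
    by (intro mult_left_mono) auto
  also have "\<dots> = \<delta> * t * exp (- (\<gamma> - \<delta>) * t)"
    by (simp add: algebra_simps flip: exp_add)
  also have "\<dots> \<le> \<delta> * t * exp (- (\<gamma> / 2) * t)"
  proof -
    have "- (\<gamma> - \<delta>) * t \<le> - (\<gamma> / 2) * t" using \<delta> t by (intro mult_right_mono) auto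
    then show ?thesis using \<delta> t by (intro mult_left_mono) auto
  qed
  also have "\<dots> = \<delta> * (t * exp (- (\<gamma> / 4) * t)) * exp (- (\<gamma> / 4) * t)"
    by (simp add: algebra_simps flip: exp_add)
  also have "\<dots> \<le> \<delta> * (4 / \<gamma>) * exp (- (\<gamma> / 4) * t)"
  proof -
    have "t \<le> (4 / \<gamma>) * exp ((\<gamma> / 4) * t)"
      using exp_ge_add_one_self[of "(\<gamma> / 4) * t"] \<gamma> by (simp add: field_simps)
    then have "t * exp (- (\<gamma> / 4) * t) \<le> (4 / \<gamma>) * exp ((\<gamma> / 4) * t) * exp (- (\<gamma> / 4) * t)"
      by (intro mult_right_mono) auto
    also have "\<dots> = 4 / \<gamma>" by (simp flip: exp_add)
    finally show ?thesis using \<delta> by (intro mult_right_mono mult_left_mono) auto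
  qed
  finally show ?thesis .
qed

lemma abs_exp_minus_one_le: "\<bar>exp s - 1\<bar> \<le> exp \<bar>s\<bar> - (1::real)"
proof (cases "s \<ge> 0")
  case False
  then have "\<bar>exp s - 1\<bar> = 1 - exp s" by simp
  also have "\<dots> \<le> - s" using exp_ge_add_one_self[of s] by linarith
  also have "\<dots> \<le> exp (- s) - 1" using exp_ge_add_one_self[of "- s"] by linarith
  finally show ?thesis using False by simp
qed simp

lemma le_inverse_square_if_self_dominated:
  fixes k T x :: real
  assumes k: "0 < k" and T: "0 \<le> T" and "k * T \<le> x" and "x\<^sup>2 \<le> T"
  shows "T \<le> 1 / k\<^sup>2"
proof (cases "T = 0")
  case False
  then have "T > 0" using T by simp
  have "(k * T)\<^sup>2 \<le> x\<^sup>2" using assms by (intro power_mono) auto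
  with \<open>x\<^sup>2 \<le> T\<close> have "(k * T)\<^sup>2 \<le> T" by linarith
  then have "(k\<^sup>2 * T) * T \<le> 1 * T" by (simp add: power2_eq_square mult_ac)
  then have "k\<^sup>2 * T \<le> 1" using \<open>T > 0\<close> by (simp only: mult_le_cancel_right_pos)
  then show ?thesis using k by (simp add: field_simps)
qed simp

lemma schur_test_symmetric:
  fixes G :: "'i \<Rightarrow> 'i \<Rightarrow> real"
  assumes "finite S" and row: "\<And>i. i \<in> S \<Longrightarrow> (\<Sum>j\<in>S. G i j) \<le> R"
    and sym: "\<And>i j. G i j = G j i" and nonneg: "\<And>i j. G i j \<ge> 0"
  shows "(\<Sum>i\<in>S. \<Sum>j\<in>S. \<bar>m i\<bar> * \<bar>m j\<bar> * G i j) \<le> R * (\<Sum>i\<in>S. (m i)\<^sup>2)"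
proof -
  have "(\<Sum>i\<in>S. \<Sum>j\<in>S. \<bar>m i\<bar> * \<bar>m j\<bar> * G i j) \<le>
        (\<Sum>i\<in>S. \<Sum>j\<in>S. (m i)\<^sup>2 / 2 * G i j + (m j)\<^sup>2 / 2 * G i j)"
  proof (intro sum_mono)
    fix i j
    have "\<bar>m i\<bar> * \<bar>m j\<bar> \<le> (m i)\<^sup>2 / 2 + (m j)\<^sup>2 / 2"
      using sum_squares_bound[of "\<bar>m i\<bar>" "\<bar>m j\<bar>"] by (simp add: power2_eq_square)
    then have "\<bar>m i\<bar> * \<bar>m j\<bar> * G i j \<le> ((m i)\<^sup>2 / 2 + (m j)\<^sup>2 / 2) * G i j"
      by (rule mult_right_mono[OF _ nonneg])
    then show "\<bar>m i\<bar> * \<bar>m j\<bar> * G i j \<le> (m i)\<^sup>2 / 2 * G i j + (m j)\<^sup>2 / 2 * G i j"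
      by (simp add: distrib_right)
  qed
  also have "\<dots> = (\<Sum>i\<in>S. (m i)\<^sup>2 / 2 * (\<Sum>j\<in>S. G i j)) + (\<Sum>j\<in>S. (m j)\<^sup>2 / 2 * (\<Sum>i\<in>S. G j i))"
  proof -
    have "(\<Sum>i\<in>S. \<Sum>j\<in>S. (m j)\<^sup>2 / 2 * G i j) = (\<Sum>j\<in>S. \<Sum>i\<in>S. (m j)\<^sup>2 / 2 * G j i)"
      by (subst sum.swap) (simp add: sym)
    then show ?thesis by (simp only: sum.distrib sum_distrib_left)
  qed
  also have "\<dots> \<le> (\<Sum>i\<in>S. (m i)\<^sup>2 / 2 * R) + (\<Sum>j\<in>S. (m j)\<^sup>2 / 2 * R)"
    by (intro add_mono sum_mono mult_left_mono row) auto
  also have "\<dots> = R * (\<Sum>i\<in>S. (m i)\<^sup>2)"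
    by (simp add: sum_distrib_left sum_distrib_right algebra_simps flip: sum.distrib)
  finally show ?thesis .
qed

lemma schur_test:
  fixes V :: "'i \<Rightarrow> 'j \<Rightarrow> real"
  assumes "finite I" "finite J" "R \<ge> 0"
    and row: "\<And>i. i \<in> I \<Longrightarrow> (\<Sum>j\<in>J. \<bar>V i j\<bar>) \<le> R"
    and col: "\<And>j. j \<in> J \<Longrightarrow> (\<Sum>i\<in>I. \<bar>V i j\<bar>) \<le> R"
  shows "(\<Sum>i\<in>I. (\<Sum>j\<in>J. V i j * c j)\<^sup>2) \<le> R\<^sup>2 * (\<Sum>j\<in>J. (c j)\<^sup>2)"
proof -
  have row_cs: "(\<Sum>j\<in>J. V i j * c j)\<^sup>2 \<le> R * (\<Sum>j\<in>J. \<bar>V i j\<bar> * (c j)\<^sup>2)" if "i \<in> I" for i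
  proof -
    have split: "V i j * c j = sqrt \<bar>V i j\<bar> * (sgn (V i j) * sqrt \<bar>V i j\<bar> * c j)" for j
    proof -
      have "sqrt \<bar>V i j\<bar> * sqrt \<bar>V i j\<bar> = \<bar>V i j\<bar>" by simp
      then show ?thesis by (metis (no_types, lifting) mult.assoc mult.left_commute sgn_mult_abs)
    qed
    have sq: "(sgn (V i j) * sqrt \<bar>V i j\<bar> * c j)\<^sup>2 = \<bar>V i j\<bar> * (c j)\<^sup>2" for j
    proof -
      have "(sgn (V i j))\<^sup>2 * \<bar>V i j\<bar> = \<bar>V i j\<bar>" by (cases "V i j = 0") (auto simp: sgn_if)
      then show ?thesis by (simp add: power_mult_distrib)
    qed
    have "(\<Sum>j\<in>J. V i j * c j)\<^sup>2
        \<le> (\<Sum>j\<in>J. (sqrt \<bar>V i j\<bar>)\<^sup>2) * (\<Sum>j\<in>J. (sgn (V i j) * sqrt \<bar>V i j\<bar> * c j)\<^sup>2)"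
      unfolding split by (rule Cauchy_Schwarz_ineq_sum)
    also have "\<dots> = (\<Sum>j\<in>J. \<bar>V i j\<bar>) * (\<Sum>j\<in>J. \<bar>V i j\<bar> * (c j)\<^sup>2)"
      by (simp add: sq)
    also have "\<dots> \<le> R * (\<Sum>j\<in>J. \<bar>V i j\<bar> * (c j)\<^sup>2)"
      by (intro mult_right_mono row that sum_nonneg) auto
    finally show ?thesis .
  qed
  have "(\<Sum>i\<in>I. (\<Sum>j\<in>J. V i j * c j)\<^sup>2) \<le> (\<Sum>i\<in>I. R * (\<Sum>j\<in>J. \<bar>V i j\<bar> * (c j)\<^sup>2))"
    by (intro sum_mono row_cs)
  also have "\<dots> = R * (\<Sum>j\<in>J. (c j)\<^sup>2 * (\<Sum>i\<in>I. \<bar>V i j\<bar>))"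
    by (simp add: sum_distrib_left sum_distrib_right sum.swap[of _ I J] mult.commute mult.left_commute)
  also have "\<dots> \<le> R * (\<Sum>j\<in>J. (c j)\<^sup>2 * R)"
    using \<open>R \<ge> 0\<close> by (intro mult_left_mono sum_mono col) auto
  also have "\<dots> = R\<^sup>2 * (\<Sum>j\<in>J. (c j)\<^sup>2)"
    by (simp add: sum_distrib_left sum_distrib_right power2_eq_square mult.commute mult.left_commute)
  finally show ?thesis .
qed

lemma sum_strict_mono_blocks:
  fixes h :: "nat \<Rightarrow> 'b::comm_monoid_add" and N :: "nat \<Rightarrow> nat"
  assumes "strict_mono N"
  shows "(\<Sum>k<p. \<Sum>n\<in>{N (k + l)..<N (k + l + 1)}. h n) = (\<Sum>n\<in>{N l..<N (p + l)}. h n)"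
proof (induction p)
  case (Suc p)
  have "N l \<le> N (p + l)" "N (p + l) \<le> N (p + l + 1)"
    by (simp_all add: assms strict_mono_leD)
  then show ?case
    using Suc.IH sum.atLeastLessThan_concat[of "N l" "N (p + l)" "N (p + l + 1)" h] by simp
qed simp

locale riesz_system =
  fixes w :: "nat \<Rightarrow> 'x::real_normed_vector" and C :: real
  assumes riesz: "riesz_basis w C"
begin

abbreviation X :: "nat \<Rightarrow> 'x set" where "X n \<equiv> span (w ` {..<n})"

lemma C_pos: "C > 0"
  using riesz unfolding riesz_basis_def by auto

lemma riesz_bounds_finite:
  "(1 / C) * (norm (\<Sum>i<n. l i *\<^sub>R w i))\<^sup>2 \<le> (\<Sum>i<n. (l i)\<^sup>2) \<and>
   (\<Sum>i<n. (l i)\<^sup>2) \<le> C * (norm (\<Sum>i<n. l i *\<^sub>R w i))\<^sup>2"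
proof -
  define l' where "l' i = (if i < n then l i else 0)" for i
  have "(\<lambda>i. l' i *\<^sub>R w i) sums (\<Sum>i<n. l' i *\<^sub>R w i)"
    by (rule sums_finite) (auto simp: l'_def)
  then have sums: "(\<lambda>i. l' i *\<^sub>R w i) sums (\<Sum>i<n. l i *\<^sub>R w i)"
    by (simp add: l'_def)
  have "(\<Sum>i. (l' i)\<^sup>2) = (\<Sum>i<n. (l' i)\<^sup>2)"
    by (rule suminf_finite) (auto simp: l'_def)
  then have sum_sq: "(\<Sum>i. (l' i)\<^sup>2) = (\<Sum>i<n. (l i)\<^sup>2)"
    by (simp add: l'_def)
  have "(1 / C) * (norm (\<Sum>i<n. l i *\<^sub>R w i))\<^sup>2 \<le> (\<Sum>i. (l' i)\<^sup>2) \<and>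
        (\<Sum>i. (l' i)\<^sup>2) \<le> C * (norm (\<Sum>i<n. l i *\<^sub>R w i))\<^sup>2"
    using riesz sums unfolding riesz_basis_def by blast
  then show ?thesis
    unfolding sum_sq .
qed

lemma coeff_eq_zero_if_sum_eq_zero:
  assumes "(\<Sum>i<n. l i *\<^sub>R w i) = 0" "i < n"
  shows "l i = 0"
proof -
  have "(l i)\<^sup>2 \<le> (\<Sum>i<n. (l i)\<^sup>2)"
    using assms(2) by (intro member_le_sum) auto
  also have "\<dots> \<le> 0"
    using riesz_bounds_finite[where n=n and l=l] assms(1) by simp
  finally show ?thesis by simp
qed

lemma norm_basis_sq_le: "(norm (w n))\<^sup>2 \<le> C"
proof -
  define l where "l i = (if i = n then 1 else (0::real))" for i
  have "(\<Sum>i<Suc n. l i *\<^sub>R w i) = w n" "(\<Sum>i<Suc n. (l i)\<^sup>2) = 1"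
    by (simp_all add: l_def if_distrib sum.delta cong: if_cong)
  then show ?thesis
    using riesz_bounds_finite[where n="Suc n" and l=l] C_pos by (simp add: field_simps)
qed

lemma span_prefix_expansion:
  "y \<in> X n \<Longrightarrow> \<exists>l. y = (\<Sum>i<n. l i *\<^sub>R w i) \<and> (\<forall>i\<ge>n. l i = 0)"
proof (induction n arbitrary: y)
  case 0
  then show ?case by (auto intro!: exI[of _ "\<lambda>_. 0"])
next
  case (Suc n)
  have "y \<in> span (insert (w n) (w ` {..<n}))"
    using Suc.prems by (simp add: lessThan_Suc)
  then obtain k where "y - k *\<^sub>R w n \<in> X n"
    unfolding span_insert by blast
  then obtain l where l: "y - k *\<^sub>R w n = (\<Sum>i<n. l i *\<^sub>R w i)" "\<forall>i\<ge>n. l i = 0"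
    using Suc.IH by blast
  define l' where "l' i = (if i = n then k else l i)" for i
  have "y = (\<Sum>i<Suc n. l' i *\<^sub>R w i)"
    using l(1) by (simp add: l'_def algebra_simps)
  moreover have "\<forall>i\<ge>Suc n. l' i = 0"
    using l(2) by (simp add: l'_def)
  ultimately show ?case by blast
qed

lemma sum_in_span_prefix: "(\<Sum>i<n. l i *\<^sub>R w i) \<in> X n"
  by (intro span_sum span_scale span_base) auto

lemma span_prefix_mono: "m \<le> n \<Longrightarrow> X m \<subseteq> X n"
  by (intro span_mono image_mono) auto

lemma basis_in_span_prefix: "i < n \<Longrightarrow> w i \<in> X n"
  by (intro span_base) auto

lemma basis_notin_span_prefix: "w n \<notin> X n"
proof
  assume "w n \<in> X n"
  then obtain l where l: "w n = (\<Sum>i<n. l i *\<^sub>R w i)"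
    using span_prefix_expansion by blast
  define l' where "l' i = (if i = n then -1 else l i)" for i
  have "(\<Sum>i<Suc n. l' i *\<^sub>R w i) = 0"
    using l by (simp add: l'_def)
  then have "l' n = 0" by (rule coeff_eq_zero_if_sum_eq_zero) simp
  then show False by (simp add: l'_def)
qed

end

locale galerkin = riesz_system w C
  for w :: "nat \<Rightarrow> 'x::real_normed_vector" and C +
  fixes a :: "'x \<Rightarrow> 'x \<Rightarrow> real" and c0 :: real
  assumes bilinear: "bounded_bilinear a"
    and c0_pos: "c0 > 0"
    and coercive: "\<And>x. c0 * (norm x)\<^sup>2 \<le> a x x"
begin

sublocale bounded_bilinear a by (rule bilinear)

lemma a_scaleR_left: "a (r *\<^sub>R x) y = r * a x y"
  using scaleR_left by simp

lemma a_scaleR_right: "a x (r *\<^sub>R y) = r * a x y"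
  using scaleR_right by simp

lemma a_eq_zero_on_span:
  assumes "\<And>z. z \<in> S \<Longrightarrow> a y z = 0" "z \<in> span S"
  shows "a y z = 0"
  using linear_eq_0_on_span[OF bounded_linear.linear[OF bounded_linear_right] assms] .

lemma eq_zero_if_a_self_eq_zero: "a y y = 0 \<Longrightarrow> y = 0"
  using coercive[of y] c0_pos by (simp add: zero_less_mult_iff mult_le_0_iff)

lemma galerkin_solvable: "\<exists>y\<in>X m. \<forall>i<m. a y (w i) = g i"
proof (induction m arbitrary: g)
  case 0
  show ?case by (auto intro: span_zero)
next
  case (Suc m)
  obtain y0 where y0: "y0 \<in> X m" "\<forall>i<m. a y0 (w i) = g i"
    using Suc.IH[of g] by blast
  obtain z where z: "z \<in> X m" "\<forall>i<m. a z (w i) = a (w m) (w i)"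
    using Suc.IH[of "\<lambda>i. a (w m) (w i)"] by blast
  define q where "q = w m - z"
  have q_orth: "a q (w i) = 0" if "i < m" for i
    using z that by (simp add: q_def diff_left)
  have q_span: "q \<in> X (Suc m)"
    unfolding q_def using span_prefix_mono[of m "Suc m"] z(1) basis_in_span_prefix[of m "Suc m"]
    by (auto intro: span_diff)
  have "q \<noteq> 0"
  proof
    assume "q = 0"
    then have "z = w m" by (simp add: q_def)
    then show False using z(1) basis_notin_span_prefix[of m] by blast
  qed
  moreover have "a q (w m) = a q q"
  proof -
    have "a q z = 0"
      by (rule a_eq_zero_on_span[of "w ` {..<m}"]) (use q_orth z(1) in auto)
    then show ?thesis by (simp add: q_def diff_right)
  qed
  ultimately have q_diag: "a q (w m) \<noteq> 0"
    using eq_zero_if_a_self_eq_zero by auto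
  define y where "y = y0 + ((g m - a y0 (w m)) / a q (w m)) *\<^sub>R q"
  have "y \<in> X (Suc m)"
    unfolding y_def using span_prefix_mono[of m "Suc m"] y0(1) q_span
    by (auto intro: span_add span_scale)
  moreover have "a y (w i) = g i" if "i < Suc m" for i
    using that y0 q_orth q_diag by (cases "i = m") (auto simp: y_def add_left a_scaleR_left)
  ultimately show ?case by blast
qed

lemma coercive_sum_basis:
  "(c0 / C) * (\<Sum>i<m. (l i)\<^sup>2) \<le> a (\<Sum>i<m. l i *\<^sub>R w i) (\<Sum>i<m. l i *\<^sub>R w i)"
proof -
  have "(c0 / C) * (\<Sum>i<m. (l i)\<^sup>2) \<le> (c0 / C) * (C * (norm (\<Sum>i<m. l i *\<^sub>R w i))\<^sup>2)"
    using riesz_bounds_finite[where n=m and l=l] c0_pos C_pos by (intro mult_left_mono) auto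
  also have "\<dots> \<le> a (\<Sum>i<m. l i *\<^sub>R w i) (\<Sum>i<m. l i *\<^sub>R w i)"
    using coercive C_pos by simp
  finally show ?thesis .
qed

definition ortho_basis :: "nat \<Rightarrow> 'x" where
  "ortho_basis n = (SOME y. y \<in> X (Suc n) \<and> (\<forall>i<Suc n. a y (w i) = (if i = n then 1 else 0)))"

lemma ortho_basis:
  "ortho_basis n \<in> X (Suc n)"
  "i \<le> n \<Longrightarrow> a (ortho_basis n) (w i) = (if i = n then 1 else 0)"
proof -
  have "\<exists>y. y \<in> X (Suc n) \<and> (\<forall>i<Suc n. a y (w i) = (if i = n then 1 else 0))"
    using galerkin_solvable[where m="Suc n" and g="\<lambda>i. if i = n then 1 else 0"] by blast
  from someI_ex[OF this] show "ortho_basis n \<in> X (Suc n)"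
    and "i \<le> n \<Longrightarrow> a (ortho_basis n) (w i) = (if i = n then 1 else 0)"
    unfolding ortho_basis_def by auto
qed

lemma ortho_basis_in_span_prefix: "n < N \<Longrightarrow> ortho_basis n \<in> X N"
  using ortho_basis(1) span_prefix_mono[of "Suc n" N] by auto

lemma a_ortho_basis_span_prefix: "z \<in> X n \<Longrightarrow> a (ortho_basis n) z = 0"
  by (rule a_eq_zero_on_span[of "w ` {..<n}"]) (auto simp: ortho_basis(2))

definition ortho_coeff :: "nat \<Rightarrow> nat \<Rightarrow> real" where
  "ortho_coeff n = (SOME l. ortho_basis n = (\<Sum>i<Suc n. l i *\<^sub>R w i) \<and> (\<forall>i\<ge>Suc n. l i = 0))"

lemma ortho_coeff:
  "ortho_basis n = (\<Sum>i<Suc n. ortho_coeff n i *\<^sub>R w i)"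
  "n < i \<Longrightarrow> ortho_coeff n i = 0"
proof -
  have "\<exists>l. ortho_basis n = (\<Sum>i<Suc n. l i *\<^sub>R w i) \<and> (\<forall>i\<ge>Suc n. l i = 0)"
    using span_prefix_expansion[OF ortho_basis(1)] .
  from someI_ex[OF this] show "ortho_basis n = (\<Sum>i<Suc n. ortho_coeff n i *\<^sub>R w i)"
    and "n < i \<Longrightarrow> ortho_coeff n i = 0"
    unfolding ortho_coeff_def by auto
qed

lemma ortho_basis_expansion:
  assumes "n < N"
  shows "ortho_basis n = (\<Sum>i<N. ortho_coeff n i *\<^sub>R w i)"
proof -
  have "(\<Sum>i<N. ortho_coeff n i *\<^sub>R w i) = (\<Sum>i<Suc n. ortho_coeff n i *\<^sub>R w i)"
    using assms by (intro sum.mono_neutral_right) (auto simp: ortho_coeff(2))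
  then show ?thesis by (simp add: ortho_coeff(1))
qed

lemma a_ortho_basis_self: "a (ortho_basis n) (ortho_basis n) = ortho_coeff n n"
proof -
  have "a (ortho_basis n) (ortho_basis n) = (\<Sum>i<Suc n. ortho_coeff n i * a (ortho_basis n) (w i))"
    by (subst (2) ortho_coeff(1)) (simp only: sum_right a_scaleR_right)
  also have "\<dots> = ortho_coeff n n"
    by (simp add: ortho_basis(2) if_distrib cong: if_cong)
  finally show ?thesis .
qed

lemma ortho_coeff_diag_ge: "\<exists>\<rho>>0. \<forall>n. \<rho> \<le> ortho_coeff n n"
proof -
  obtain K where K: "K > 0" "\<And>x y. norm (a x y) \<le> norm x * norm y * K"
    using pos_bounded by blast
  have "c0 / (C * K\<^sup>2) \<le> ortho_coeff n n" for n
  proof -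
    have "1 \<le> norm (ortho_basis n) * norm (w n) * K"
      using K(2)[of "ortho_basis n" "w n"] ortho_basis(2)[of n n] by simp
    then have "1 \<le> (norm (ortho_basis n) * norm (w n) * K)\<^sup>2"
      by (rule one_le_power)
    also have "\<dots> = (norm (ortho_basis n))\<^sup>2 * (norm (w n))\<^sup>2 * K\<^sup>2"
      by (simp add: power_mult_distrib)
    also have "\<dots> \<le> (norm (ortho_basis n))\<^sup>2 * C * K\<^sup>2"
      by (intro mult_right_mono mult_left_mono norm_basis_sq_le) auto
    finally have "c0 / (C * K\<^sup>2) \<le> c0 * (norm (ortho_basis n))\<^sup>2"
      using C_pos K(1) c0_pos by (simp add: field_simps)
    also have "\<dots> \<le> ortho_coeff n n"
      using coercive[of "ortho_basis n"] by (simp add: a_ortho_basis_self)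
    finally show ?thesis .
  qed
  moreover have "c0 / (C * K\<^sup>2) > 0"
    using c0_pos C_pos K(1) by simp
  ultimately show ?thesis by blast
qed

lemma basis_in_span_ortho_basis: "j < n \<Longrightarrow> w j \<in> span (ortho_basis ` {..<n})"
proof (induction j rule: less_induct)
  case (less j)
  obtain \<rho> where \<rho>: "\<rho> > 0" "\<And>n. \<rho> \<le> ortho_coeff n n"
    using ortho_coeff_diag_ge by blast
  then have "ortho_coeff j j \<noteq> 0"
    by (metis not_less order.refl)
  moreover have "ortho_basis j - (\<Sum>i<j. ortho_coeff j i *\<^sub>R w i) = ortho_coeff j j *\<^sub>R w j"
    by (simp add: ortho_coeff(1))
  ultimately have w_eq: "w j = inverse (ortho_coeff j j) *\<^sub>R (ortho_basis j - (\<Sum>i<j. ortho_coeff j i *\<^sub>R w i))"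
    by simp
  have "inverse (ortho_coeff j j) *\<^sub>R (ortho_basis j - (\<Sum>i<j. ortho_coeff j i *\<^sub>R w i))
        \<in> span (ortho_basis ` {..<n})"
    using less by (intro span_scale span_diff span_sum) (auto intro: span_base)
  then show ?case
    by (subst w_eq)
qed

lemma basis_bessel: "\<exists>K>0. \<forall>N z. (\<Sum>i<N. (a (w i) z)\<^sup>2) \<le> K * (norm z)\<^sup>2"
proof -
  obtain K where K: "K > 0" "\<And>x y. norm (a x y) \<le> norm x * norm y * K"
    using pos_bounded by blast
  have "(\<Sum>i<N. (a (w i) z)\<^sup>2) \<le> (C * K\<^sup>2) * (norm z)\<^sup>2" for N z
  proof -
    define y where "y = (\<Sum>i<N. a (w i) z *\<^sub>R w i)"
    define S where "S = (\<Sum>i<N. (a (w i) z)\<^sup>2)"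
    have "S \<ge> 0" unfolding S_def by (simp add: sum_nonneg)
    have "S = a y z"
      unfolding y_def S_def by (simp add: sum_left a_scaleR_left power2_eq_square)
    also have "\<dots> \<le> norm y * norm z * K"
      using K(2)[of y z] by simp
    finally have "S\<^sup>2 \<le> (norm y * norm z * K)\<^sup>2"
      using \<open>S \<ge> 0\<close> by (rule power_mono)
    also have "\<dots> = (norm y)\<^sup>2 * ((norm z)\<^sup>2 * K\<^sup>2)"
      by (simp add: power_mult_distrib)
    also have "\<dots> \<le> (C * S) * ((norm z)\<^sup>2 * K\<^sup>2)"
      using riesz_bounds_finite[where n=N and l="\<lambda>i. a (w i) z"] C_pos
      by (intro mult_right_mono) (auto simp: y_def S_def field_simps)
    finally have "S * S \<le> S * (C * K\<^sup>2 * (norm z)\<^sup>2)"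
      by (simp add: power2_eq_square algebra_simps)
    then have "S \<le> C * K\<^sup>2 * (norm z)\<^sup>2"
      using \<open>S \<ge> 0\<close> C_pos by (cases "S = 0") (auto simp: mult_le_cancel_left_pos)
    then show ?thesis unfolding S_def .
  qed
  moreover have "C * K\<^sup>2 > 0"
    using C_pos K(1) by simp
  ultimately show ?thesis by blast
qed

definition galerkin_sequence :: "'x \<Rightarrow> (nat \<Rightarrow> nat) \<Rightarrow> (nat \<Rightarrow> 'x) \<Rightarrow> bool" where
  "galerkin_sequence u N U \<longleftrightarrow>
     strict_mono N \<and> (\<forall>l. U l \<in> X (N l) \<and> (\<forall>y\<in>X (N l). a (U l) y = a u y))"

lemma cea_estimate:
  assumes "subspace V" "U \<in> V" "y \<in> V" "\<And>z. z \<in> V \<Longrightarrow> a U z = a u z"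
    and K: "K \<ge> 0" "\<And>x y. norm (a x y) \<le> norm x * norm y * K"
  shows "c0 * norm (u - U) \<le> K * norm (u - y)"
proof -
  have "a (u - U) (y - U) = 0"
    using assms(1-4) by (simp add: diff_left subspace_diff)
  then have "c0 * (norm (u - U))\<^sup>2 \<le> a (u - U) (u - y)"
    using coercive[of "u - U"] by (simp add: diff_right)
  also have "\<dots> \<le> norm (u - U) * (K * norm (u - y))"
    using K(2)[of "u - U" "u - y"] by (simp add: mult_ac)
  finally have "norm (u - U) * (c0 * norm (u - U)) \<le> norm (u - U) * (K * norm (u - y))"
    by (simp add: power2_eq_square mult_ac)
  then show ?thesis
    using K(1) by (cases "norm (u - U) = 0") (auto simp: mult_le_cancel_left_pos c0_pos)
qed

lemma galerkin_sequence_tendsto: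
  assumes "galerkin_sequence u N U"
  shows "U \<longlonglongrightarrow> u"
proof -
  obtain lam where "(\<lambda>n. lam n *\<^sub>R w n) sums u"
    using riesz unfolding riesz_basis_def by blast
  define s where "s m = (\<Sum>i<N m. lam i *\<^sub>R w i)" for m
  obtain K where K: "K > 0" "\<And>x y. norm (a x y) \<le> norm x * norm y * K"
    using pos_bounded by blast
  have "(\<lambda>M. \<Sum>i<M. lam i *\<^sub>R w i) \<longlonglongrightarrow> u"
    using \<open>(\<lambda>n. lam n *\<^sub>R w n) sums u\<close> by (simp add: sums_def)
  from LIMSEQ_subseq_LIMSEQ[OF this] assms have "s \<longlonglongrightarrow> u"
    unfolding galerkin_sequence_def s_def by (simp add: o_def)
  from tendsto_norm_zero[OF LIM_zero[OF this]]
  have "(\<lambda>m. norm (u - s m)) \<longlonglongrightarrow> 0"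
    by (simp add: norm_minus_commute)
  then have bound_tendsto: "(\<lambda>m. (K / c0) * norm (u - s m)) \<longlonglongrightarrow> 0"
    by (rule tendsto_mult_right_zero)
  have "\<forall>m. norm (U m - u) \<le> (K / c0) * norm (u - s m)"
  proof
    fix m
    have "U m \<in> X (N m)" "\<And>z. z \<in> X (N m) \<Longrightarrow> a (U m) z = a u z"
      using assms unfolding galerkin_sequence_def by auto
    then have "c0 * norm (u - U m) \<le> K * norm (u - s m)"
      unfolding s_def by (rule cea_estimate[OF subspace_span _ sum_in_span_prefix _ less_imp_le[OF K(1)] K(2)])
    then show "norm (U m - u) \<le> (K / c0) * norm (u - s m)"
      using c0_pos by (simp add: norm_minus_commute field_simps)
  qed
  from this bound_tendsto have "(\<lambda>m. U m - u) \<longlonglongrightarrow> 0"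
    by (rule Lim_null_comparison[OF always_eventually])
  then show ?thesis
    by (rule LIM_zero_cancel)
qed

end

locale jaffard_galerkin = galerkin w C a c0
  for w :: "nat \<Rightarrow> 'x::real_normed_vector" and C a c0 +
  fixes d :: "nat \<Rightarrow> nat \<Rightarrow> real" and \<gamma> Cg :: real
  assumes metric: "nat_metric d"
    and exp_summable: "\<And>\<epsilon>. \<epsilon> > 0 \<Longrightarrow>
      (\<forall>i. summable (\<lambda>j. exp (- \<epsilon> * d i j))) \<and> (\<exists>B. \<forall>i. (\<Sum>j. exp (- \<epsilon> * d i j)) \<le> B)"
    and \<gamma>_pos: "\<gamma> > 0"
    and decay: "\<And>i j. \<bar>a (w j) (w i)\<bar> \<le> Cg * exp (- \<gamma> * d i j)"
begin

lemma d_self: "d i i = 0" and d_sym: "d i j = d j i" and d_triangle: "d i k \<le> d i j + d j k"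
  using metric unfolding nat_metric_def by auto

lemma exp_sum_bounded:
  assumes "\<epsilon> > 0"
  obtains B where "B \<ge> 0" "\<And>i S. finite S \<Longrightarrow> (\<Sum>j\<in>S. exp (- \<epsilon> * d i j)) \<le> B"
proof -
  obtain B where summable: "\<And>i. summable (\<lambda>j. exp (- \<epsilon> * d i j))"
    and B: "\<And>i. (\<Sum>j. exp (- \<epsilon> * d i j)) \<le> B"
    using exp_summable[OF assms] by blast
  have bound: "(\<Sum>j\<in>S. exp (- \<epsilon> * d i j)) \<le> B" if "finite S" for i S
  proof -
    have "(\<Sum>j\<in>S. exp (- \<epsilon> * d i j)) \<le> (\<Sum>j. exp (- \<epsilon> * d i j))"
      by (rule sum_le_suminf[OF summable that]) simp
    then show ?thesis using B[of i] by linarith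
  qed
  moreover have "B \<ge> 0"
    using bound[of "{}"] by simp
  ultimately show thesis using that by blast
qed

lemma Cg_nonneg: "Cg \<ge> 0"
proof -
  have "\<bar>a (w 0) (w 0)\<bar> \<le> Cg"
    using decay[of 0 0] by (simp add: d_self)
  then show ?thesis by (meson abs_ge_zero order_trans)
qed

lemma weight_ratio_bound:
  assumes "0 \<le> \<delta>"
  shows "\<bar>exp (\<delta> * d n i) / exp (\<delta> * d n j) - 1\<bar> \<le> exp (\<delta> * d i j) - 1"
proof -
  have "\<bar>d n i - d n j\<bar> \<le> d i j"
    using d_triangle[of n i j] d_triangle[of n j i] d_sym[of i j] by linarith
  then have "\<bar>\<delta> * (d n i - d n j)\<bar> \<le> \<delta> * d i j"
    using assms by (simp add: abs_mult mult_left_mono)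
  then have "exp \<bar>\<delta> * (d n i - d n j)\<bar> \<le> exp (\<delta> * d i j)"
    by simp
  moreover have "exp (\<delta> * d n i) / exp (\<delta> * d n j) = exp (\<delta> * (d n i - d n j))"
    by (simp add: exp_diff right_diff_distrib)
  ultimately show ?thesis
    using abs_exp_minus_one_le[of "\<delta> * (d n i - d n j)"] by linarith
qed

text \<open>The bound \<open>c0 / (2 * C)\<close> is half the coercivity constant of the Gram matrix on
  coefficient vectors, see \<open>coercive_sum_basis\<close>.\<close>

lemma small_perturbation_kernel:
  obtains \<delta> G where "\<delta> > 0" "\<And>i j. G i j = G j i" "\<And>i j. 0 \<le> G i j"
    "\<And>i S. finite S \<Longrightarrow> (\<Sum>j\<in>S. G i j) \<le> c0 / (2 * C)"
    "\<And>i j. \<bar>a (w j) (w i)\<bar> * (exp (\<delta> * d i j) - 1) \<le> G i j"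
proof -
  obtain B where B: "B \<ge> 0" "\<And>i S. finite S \<Longrightarrow> (\<Sum>j\<in>S. exp (- (\<gamma> / 4) * d i j)) \<le> B"
    using exp_sum_bounded[of "\<gamma> / 4"] \<gamma>_pos by auto
  have CgB: "Cg * B \<ge> 0"
    using Cg_nonneg B(1) by simp
  define \<delta> where "\<delta> = min (\<gamma> / 2) (c0 * \<gamma> / (8 * C * (Cg * B + 1)))"
  define \<eta> where "\<eta> = Cg * \<delta> * (4 / \<gamma>)"
  define G where "G i j = \<eta> * exp (- (\<gamma> / 4) * d i j)" for i j
  have \<delta>: "\<delta> > 0" "\<delta> \<le> \<gamma> / 2"
    unfolding \<delta>_def using \<gamma>_pos c0_pos C_pos CgB by auto
  have \<eta>: "\<eta> \<ge> 0"
    unfolding \<eta>_def using Cg_nonneg \<delta> \<gamma>_pos by simp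
  have "\<eta> * B \<le> c0 / (2 * C)"
  proof -
    have "\<delta> \<le> c0 * \<gamma> / (8 * C * (Cg * B + 1))"
      unfolding \<delta>_def by simp
    then have "(Cg * B) * \<delta> * (4 / \<gamma>) \<le> (Cg * B) * (c0 * \<gamma> / (8 * C * (Cg * B + 1))) * (4 / \<gamma>)"
      using CgB \<gamma>_pos by (intro mult_right_mono mult_left_mono) auto
    then have "\<eta> * B \<le> (Cg * B) * (c0 * \<gamma> / (8 * C * (Cg * B + 1))) * (4 / \<gamma>)"
      by (simp add: \<eta>_def mult_ac)
    also have "\<dots> = c0 / (2 * C) * (Cg * B / (Cg * B + 1))"
    proof -
      have "Cg * B + 1 > 0" "C * (Cg * B + 1) > 0"
        using C_pos CgB by auto
      then show ?thesis
        using \<gamma>_pos by (simp add: field_simps)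
    qed
    also have "\<dots> \<le> c0 / (2 * C) * 1"
      using c0_pos C_pos CgB by (intro mult_left_mono) auto
    finally show ?thesis by simp
  qed
  show thesis
  proof (rule that[of \<delta> G])
    show "\<delta> > 0" by (rule \<delta>(1))
    show "G i j = G j i" "0 \<le> G i j" for i j
      unfolding G_def using \<eta> by (simp_all add: d_sym)
    show "(\<Sum>j\<in>S. G i j) \<le> c0 / (2 * C)" if "finite S" for i S
    proof -
      have "(\<Sum>j\<in>S. G i j) = \<eta> * (\<Sum>j\<in>S. exp (- (\<gamma> / 4) * d i j))"
        unfolding G_def by (simp add: sum_distrib_left)
      also have "\<dots> \<le> \<eta> * B"
        using B(2)[OF that] \<eta> by (rule mult_left_mono)
      finally show ?thesis using \<open>\<eta> * B \<le> c0 / (2 * C)\<close> by linarith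
    qed
    show "\<bar>a (w j) (w i)\<bar> * (exp (\<delta> * d i j) - 1) \<le> G i j" for i j
    proof -
      have "exp (\<delta> * d i j) - 1 \<ge> 0"
        using \<delta> metric unfolding nat_metric_def by simp
      then have "\<bar>a (w j) (w i)\<bar> * (exp (\<delta> * d i j) - 1) \<le> Cg * (exp (- \<gamma> * d i j) * (exp (\<delta> * d i j) - 1))"
        using mult_right_mono[OF decay] by (simp add: mult.assoc)
      also have "\<dots> \<le> Cg * (\<delta> * (4 / \<gamma>) * exp (- (\<gamma> / 4) * d i j))"
        using metric \<delta> Cg_nonneg unfolding nat_metric_def
        by (intro mult_left_mono exp_mult_exp_minus_one_le) auto
      finally show ?thesis by (simp add: G_def \<eta>_def)
    qed
  qed
qed

lemma ortho_coeff_weighted_identity: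
  fixes om :: "nat \<Rightarrow> real"
  assumes "om n = 1" "\<And>k. om k \<noteq> 0"
  defines "\<mu> \<equiv> \<lambda>k. om k * ortho_coeff n k"
  shows "ortho_coeff n n = a (\<Sum>j<Suc n. \<mu> j *\<^sub>R w j) (\<Sum>j<Suc n. \<mu> j *\<^sub>R w j)
           + (\<Sum>i<Suc n. \<Sum>j<Suc n. \<mu> i * \<mu> j * a (w j) (w i) * (om i / om j - 1))"
proof -
  let ?S = "{..<Suc n}" and ?l = "ortho_coeff n"
  have a_ortho_basis: "a (ortho_basis n) (w i) = (\<Sum>j\<in>?S. ?l j * a (w j) (w i))" for i
    by (subst ortho_coeff(1)) (simp only: sum_left a_scaleR_left)
  have "?l n = (\<Sum>i\<in>?S. if i = n then ?l n else 0)"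
    by simp
  also have "\<dots> = (\<Sum>i\<in>?S. (om i)\<^sup>2 * ?l i * a (ortho_basis n) (w i))"
    by (rule sum.cong) (auto simp: ortho_basis(2) assms(1))
  also have "\<dots> = (\<Sum>i\<in>?S. \<Sum>j\<in>?S. (om i)\<^sup>2 * ?l i * (?l j * a (w j) (w i)))"
    by (simp only: a_ortho_basis sum_distrib_left)
  also have "\<dots> = (\<Sum>i\<in>?S. \<Sum>j\<in>?S. \<mu> i * \<mu> j * a (w j) (w i)
                     + \<mu> i * \<mu> j * a (w j) (w i) * (om i / om j - 1))"
    by (intro sum.cong refl) (use assms(2) in \<open>simp add: \<mu>_def field_simps power2_eq_square\<close>)
  also have "\<dots> = (\<Sum>i\<in>?S. \<Sum>j\<in>?S. \<mu> i * \<mu> j * a (w j) (w i))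
                 + (\<Sum>i\<in>?S. \<Sum>j\<in>?S. \<mu> i * \<mu> j * a (w j) (w i) * (om i / om j - 1))"
    by (simp only: sum.distrib)
  also have "(\<Sum>i\<in>?S. \<Sum>j\<in>?S. \<mu> i * \<mu> j * a (w j) (w i))
             = a (\<Sum>j\<in>?S. \<mu> j *\<^sub>R w j) (\<Sum>j\<in>?S. \<mu> j *\<^sub>R w j)"
    by (simp only: sum_left sum_right a_scaleR_left a_scaleR_right sum_distrib_left mult_ac)
  finally show ?thesis .
qed

lemma weight_commutator_bound:
  assumes "0 \<le> \<delta>" and G: "\<And>i j. G i j = G j i" "\<And>i j. 0 \<le> G i j"
    "\<And>i S. finite S \<Longrightarrow> (\<Sum>j\<in>S. G i j) \<le> c0 / (2 * C)"
    "\<And>i j. \<bar>a (w j) (w i)\<bar> * (exp (\<delta> * d i j) - 1) \<le> G i j"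
  shows "\<bar>\<Sum>i<m. \<Sum>j<m. \<mu> i * \<mu> j * a (w j) (w i) * (exp (\<delta> * d n i) / exp (\<delta> * d n j) - 1)\<bar>
           \<le> c0 / (2 * C) * (\<Sum>i<m. (\<mu> i)\<^sup>2)"
proof -
  have "\<bar>\<Sum>i<m. \<Sum>j<m. \<mu> i * \<mu> j * a (w j) (w i) * (exp (\<delta> * d n i) / exp (\<delta> * d n j) - 1)\<bar>
        \<le> (\<Sum>i<m. \<Sum>j<m. \<bar>\<mu> i * \<mu> j * a (w j) (w i) * (exp (\<delta> * d n i) / exp (\<delta> * d n j) - 1)\<bar>)"
    by (rule order_trans[OF sum_abs sum_mono[OF sum_abs]])
  also have "\<dots> \<le> (\<Sum>i<m. \<Sum>j<m. \<bar>\<mu> i\<bar> * \<bar>\<mu> j\<bar> * G i j)"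
  proof (intro sum_mono)
    fix i j
    have "\<bar>a (w j) (w i)\<bar> * \<bar>exp (\<delta> * d n i) / exp (\<delta> * d n j) - 1\<bar>
          \<le> \<bar>a (w j) (w i)\<bar> * (exp (\<delta> * d i j) - 1)"
      using assms(1) by (intro mult_left_mono weight_ratio_bound) auto
    also have "\<dots> \<le> G i j"
      by (rule G(4))
    finally show "\<bar>\<mu> i * \<mu> j * a (w j) (w i) * (exp (\<delta> * d n i) / exp (\<delta> * d n j) - 1)\<bar>
                  \<le> \<bar>\<mu> i\<bar> * \<bar>\<mu> j\<bar> * G i j"
      by (simp add: abs_mult mult.assoc mult_left_mono)
  qed
  also have "\<dots> \<le> c0 / (2 * C) * (\<Sum>i<m. (\<mu> i)\<^sup>2)"
    by (rule schur_test_symmetric[OF finite_lessThan G(3)[OF finite_lessThan] G(1,2)])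
  finally show ?thesis .
qed

text \<open>Jaffard's argument: conjugating by the weight \<open>exp (\<delta> * d n k)\<close> keeps the Gram matrix coercive,
  and the weighted coefficient vector of \<open>ortho_basis n\<close> is controlled by its \<open>n\<close>-th entry.\<close>

lemma ortho_coeff_bound_of_kernel:
  assumes \<delta>: "\<delta> > 0" and G: "\<And>i j. G i j = G j i" "\<And>i j. 0 \<le> G i j"
    "\<And>i S. finite S \<Longrightarrow> (\<Sum>j\<in>S. G i j) \<le> c0 / (2 * C)"
    "\<And>i j. \<bar>a (w j) (w i)\<bar> * (exp (\<delta> * d i j) - 1) \<le> G i j"
  shows "\<bar>ortho_coeff n i\<bar> \<le> (2 * C / c0) * exp (- \<delta> * d i n)"
proof (cases "i \<le> n")
  case False
  then show ?thesis using C_pos c0_pos by (simp add: ortho_coeff(2))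
next
  case True
  let ?S = "{..<Suc n}"
  define om where "om k = exp (\<delta> * d n k)" for k
  define \<mu> where "\<mu> k = om k * ortho_coeff n k" for k
  define T where "T = (\<Sum>k\<in>?S. (\<mu> k)\<^sup>2)"
  define k where "k = c0 / (2 * C)"
  define Q where "Q = (\<Sum>i\<in>?S. \<Sum>j\<in>?S. \<mu> i * \<mu> j * a (w j) (w i) * (om i / om j - 1))"
  have om_n: "om n = 1"
    by (simp add: om_def d_self)
  have om_nonzero: "om k \<noteq> 0" for k
    by (simp add: om_def)
  have "\<bar>Q\<bar> \<le> k * T"
    unfolding Q_def T_def k_def om_def by (rule weight_commutator_bound[OF less_imp_le[OF \<delta>] G])
  then have "- Q \<le> k * T"
    by simp
  moreover have "ortho_coeff n n = a (\<Sum>j\<in>?S. \<mu> j *\<^sub>R w j) (\<Sum>j\<in>?S. \<mu> j *\<^sub>R w j) + Q"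
    using ortho_coeff_weighted_identity[of om n, OF om_n om_nonzero] by (simp only: \<mu>_def Q_def)
  moreover have "(c0 / C) * T \<le> a (\<Sum>j\<in>?S. \<mu> j *\<^sub>R w j) (\<Sum>j\<in>?S. \<mu> j *\<^sub>R w j)"
    unfolding T_def by (rule coercive_sum_basis)
  moreover have "\<mu> n = ortho_coeff n n"
    by (simp add: \<mu>_def om_n)
  moreover have "c0 / C * T = 2 * (k * T)"
    by (simp add: k_def)
  ultimately have "k * T \<le> \<mu> n"
    by linarith
  moreover have "(\<mu> n)\<^sup>2 \<le> T"
    unfolding T_def by (rule member_le_sum) auto
  moreover have "(\<mu> i)\<^sup>2 \<le> T"
    unfolding T_def by (rule member_le_sum) (use True in auto)
  moreover have "0 \<le> T"
    unfolding T_def by (rule sum_nonneg) simp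
  moreover have "k > 0"
    using c0_pos C_pos by (simp add: k_def)
  ultimately have "T \<le> 1 / k\<^sup>2"
    by (intro le_inverse_square_if_self_dominated) auto
  also have "\<dots> = (2 * C / c0)\<^sup>2"
    by (simp add: k_def power_divide)
  finally have "(\<mu> i)\<^sup>2 \<le> (2 * C / c0)\<^sup>2"
    using \<open>(\<mu> i)\<^sup>2 \<le> T\<close> by linarith
  then have "\<bar>\<mu> i\<bar> \<le> 2 * C / c0"
    using abs_le_square_iff[of "\<mu> i" "2 * C / c0"] c0_pos C_pos by simp
  have "om i * exp (- \<delta> * d i n) = 1"
    unfolding om_def by (simp add: d_sym[of n i] flip: exp_add)
  then have "ortho_coeff n i = \<mu> i * exp (- \<delta> * d i n)"
    unfolding \<mu>_def by (simp add: mult.assoc)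
  with mult_right_mono[OF \<open>\<bar>\<mu> i\<bar> \<le> 2 * C / c0\<close>, of "exp (- \<delta> * d i n)"] show ?thesis
    by (simp add: abs_mult)
qed

lemma ortho_coeff_decay:
  obtains \<delta> K where "\<delta> > 0" "K \<ge> 0" "\<And>n i. \<bar>ortho_coeff n i\<bar> \<le> K * exp (- \<delta> * d i n)"
proof -
  obtain \<delta> G where kernel: "\<delta> > 0" "\<And>i j. G i j = G j i" "\<And>i j. 0 \<le> G i j"
    "\<And>i S. finite S \<Longrightarrow> (\<Sum>j\<in>S. G i j) \<le> c0 / (2 * C)"
    "\<And>i j. \<bar>a (w j) (w i)\<bar> * (exp (\<delta> * d i j) - 1) \<le> G i j"
    using small_perturbation_kernel by blast
  have "\<bar>ortho_coeff n i\<bar> \<le> (2 * C / c0) * exp (- \<delta> * d i n)" for n i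
    using kernel by (rule ortho_coeff_bound_of_kernel)
  then show thesis
    using kernel(1) c0_pos C_pos by (intro that[of \<delta> "2 * C / c0"]) auto
qed

lemma ortho_coeff_schur:
  obtains R where "R \<ge> 0"
    "\<And>n I. finite I \<Longrightarrow> (\<Sum>i\<in>I. \<bar>ortho_coeff n i\<bar>) \<le> R"
    "\<And>i I. finite I \<Longrightarrow> (\<Sum>n\<in>I. \<bar>ortho_coeff n i\<bar>) \<le> R"
proof -
  obtain \<delta> K where \<delta>K: "\<delta> > 0" "K \<ge> 0" "\<And>n i. \<bar>ortho_coeff n i\<bar> \<le> K * exp (- \<delta> * d i n)"
    using ortho_coeff_decay by blast
  obtain B where B: "B \<ge> 0" "\<And>i S. finite S \<Longrightarrow> (\<Sum>j\<in>S. exp (- \<delta> * d i j)) \<le> B"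
    using exp_sum_bounded \<delta>K(1) by blast
  have "(\<Sum>i\<in>I. \<bar>ortho_coeff n i\<bar>) \<le> K * B" if "finite I" for n I
  proof -
    have "(\<Sum>i\<in>I. \<bar>ortho_coeff n i\<bar>) \<le> K * (\<Sum>i\<in>I. exp (- \<delta> * d n i))"
      unfolding sum_distrib_left by (intro sum_mono) (subst d_sym, rule \<delta>K(3))
    also have "\<dots> \<le> K * B"
      using B(2)[OF that] \<delta>K(2) by (rule mult_left_mono)
    finally show ?thesis .
  qed
  moreover have "(\<Sum>n\<in>I. \<bar>ortho_coeff n i\<bar>) \<le> K * B" if "finite I" for i I
  proof -
    have "(\<Sum>n\<in>I. \<bar>ortho_coeff n i\<bar>) \<le> K * (\<Sum>n\<in>I. exp (- \<delta> * d i n))"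
      unfolding sum_distrib_left by (intro sum_mono \<delta>K(3))
    also have "\<dots> \<le> K * B"
      using B(2)[OF that] \<delta>K(2) by (rule mult_left_mono)
    finally show ?thesis .
  qed
  ultimately show thesis
    using \<delta>K(2) B(1) by (intro that[of "K * B"]) auto
qed

lemma ortho_basis_synthesis:
  obtains K where "K \<ge> 0"
    "\<And>P N c. (norm (\<Sum>n\<in>{P..<N}. c n *\<^sub>R ortho_basis n))\<^sup>2 \<le> K * (\<Sum>n\<in>{P..<N}. (c n)\<^sup>2)"
proof -
  obtain R where R: "R \<ge> 0"
    "\<And>n I. finite I \<Longrightarrow> (\<Sum>i\<in>I. \<bar>ortho_coeff n i\<bar>) \<le> R"
    "\<And>i I. finite I \<Longrightarrow> (\<Sum>n\<in>I. \<bar>ortho_coeff n i\<bar>) \<le> R"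
    using ortho_coeff_schur by blast
  have "(norm (\<Sum>n\<in>{P..<N}. c n *\<^sub>R ortho_basis n))\<^sup>2 \<le> (C * R\<^sup>2) * (\<Sum>n\<in>{P..<N}. (c n)\<^sup>2)"
    for P N c
  proof -
    let ?F = "{P..<N}" and ?coeff = "\<lambda>i. \<Sum>n\<in>{P..<N}. ortho_coeff n i * c n"
    have "(\<Sum>n\<in>?F. c n *\<^sub>R ortho_basis n) = (\<Sum>n\<in>?F. \<Sum>i<N. (c n * ortho_coeff n i) *\<^sub>R w i)"
      by (intro sum.cong refl) (auto simp: ortho_basis_expansion[of _ N] scaleR_sum_right)
    also have "\<dots> = (\<Sum>i<N. ?coeff i *\<^sub>R w i)"
      by (subst sum.swap) (simp add: scaleR_sum_left mult.commute)
    finally have "(norm (\<Sum>n\<in>?F. c n *\<^sub>R ortho_basis n))\<^sup>2 \<le> C * (\<Sum>i<N. (?coeff i)\<^sup>2)"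
      using riesz_bounds_finite[where n=N and l="?coeff"] C_pos by (simp add: field_simps)
    also have "\<dots> \<le> C * (R\<^sup>2 * (\<Sum>n\<in>?F. (c n)\<^sup>2))"
      using C_pos R by (intro mult_left_mono schur_test) auto
    finally show ?thesis by simp
  qed
  with C_pos show thesis
    by (intro that[of "C * R\<^sup>2"]) auto
qed

lemma ortho_basis_analysis:
  obtains K where "K \<ge> 0" "\<And>z P N. (\<Sum>n\<in>{P..<N}. (a (ortho_basis n) z)\<^sup>2) \<le> K * (norm z)\<^sup>2"
proof -
  obtain R where R: "R \<ge> 0"
    "\<And>n I. finite I \<Longrightarrow> (\<Sum>i\<in>I. \<bar>ortho_coeff n i\<bar>) \<le> R"
    "\<And>i I. finite I \<Longrightarrow> (\<Sum>n\<in>I. \<bar>ortho_coeff n i\<bar>) \<le> R"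
    using ortho_coeff_schur by blast
  obtain K where K: "K > 0" "\<And>N z. (\<Sum>i<N. (a (w i) z)\<^sup>2) \<le> K * (norm z)\<^sup>2"
    using basis_bessel by blast
  have "(\<Sum>n\<in>{P..<N}. (a (ortho_basis n) z)\<^sup>2) \<le> (R\<^sup>2 * K) * (norm z)\<^sup>2" for z P N
  proof -
    have "(\<Sum>n\<in>{P..<N}. (a (ortho_basis n) z)\<^sup>2) = (\<Sum>n\<in>{P..<N}. (\<Sum>i<N. ortho_coeff n i * a (w i) z)\<^sup>2)"
      by (intro sum.cong refl) (auto simp: ortho_basis_expansion[of _ N] sum_left a_scaleR_left)
    also have "\<dots> \<le> R\<^sup>2 * (\<Sum>i<N. (a (w i) z)\<^sup>2)"
      using R by (intro schur_test) auto
    also have "\<dots> \<le> R\<^sup>2 * (K * (norm z)\<^sup>2)"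
      by (intro mult_left_mono K(2)) auto
    finally show ?thesis by simp
  qed
  with K(1) show thesis
    by (intro that[of "R\<^sup>2 * K"]) auto
qed

end

locale jaffard_galerkin_pair =
  A: jaffard_galerkin w C a c0 d \<gamma> Cg + adj: jaffard_galerkin w C "\<lambda>x y. a y x" c0 d \<gamma> Cg
  for w :: "nat \<Rightarrow> 'x::real_normed_vector" and C a c0 d \<gamma> Cg
begin

definition rho :: "nat \<Rightarrow> real" where
  "rho n = A.ortho_coeff n n"

lemma rho_ge:
  obtains \<rho> where "\<rho> > 0" "\<And>n. \<rho> \<le> rho n"
  using A.ortho_coeff_diag_ge unfolding rho_def by blast

lemma a_ortho_basis_pair:
  "a (A.ortho_basis m) (adj.ortho_basis n) = (if m = n then rho n else 0)"
proof (cases m n rule: linorder_cases)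
  case less
  then have "A.ortho_basis m \<in> A.X n"
    by (rule A.ortho_basis_in_span_prefix)
  with less show ?thesis
    using adj.a_ortho_basis_span_prefix by simp
next
  case equal
  have "a (A.ortho_basis n) (adj.ortho_basis n) = (\<Sum>i<Suc n. A.ortho_coeff n i * a (w i) (adj.ortho_basis n))"
    by (subst A.ortho_coeff(1)) (simp only: A.sum_left A.a_scaleR_left)
  also have "\<dots> = (\<Sum>i<Suc n. if i = n then A.ortho_coeff n i else 0)"
    by (rule sum.cong) (auto simp: adj.ortho_basis(2))
  finally show ?thesis
    using equal by (simp add: rho_def)
next
  case greater
  then have "adj.ortho_basis n \<in> A.X m"
    by (rule adj.ortho_basis_in_span_prefix)
  with greater show ?thesis
    using A.a_ortho_basis_span_prefix by simp
qed

definition dual_coeff :: "'x \<Rightarrow> nat \<Rightarrow> real" where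
  "dual_coeff z n = a z (adj.ortho_basis n) / rho n"

lemma ortho_basis_expansion_of_orthogonal:
  assumes "P \<le> N" "z \<in> A.X N" and orth: "\<And>y. y \<in> A.X P \<Longrightarrow> a z y = 0"
  shows "z = (\<Sum>n\<in>{P..<N}. dual_coeff z n *\<^sub>R A.ortho_basis n)"
proof -
  obtain \<rho> where \<rho>: "\<rho> > 0" "\<And>n. \<rho> \<le> rho n"
    using rho_ge by blast
  define r where "r = z - (\<Sum>n\<in>{P..<N}. dual_coeff z n *\<^sub>R A.ortho_basis n)"
  have r_span: "r \<in> A.X N"
    unfolding r_def using assms(2) A.ortho_basis_in_span_prefix
    by (intro span_diff span_sum span_scale) auto
  have r_dual: "a r (adj.ortho_basis k) = 0" if "k < N" for k
  proof (cases "k < P")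
    case True
    have "adj.ortho_basis k \<in> A.X P"
      using True by (rule adj.ortho_basis_in_span_prefix)
    with True show ?thesis
      by (simp add: r_def orth A.diff_left A.sum_left A.a_scaleR_left a_ortho_basis_pair
          if_distrib cong: if_cong)
  next
    case False
    with that have "k \<in> {P..<N}" by simp
    moreover have "rho k \<noteq> 0"
      using \<rho>(1) \<rho>(2)[of k] by linarith
    ultimately show ?thesis
      by (simp add: r_def A.diff_left A.sum_left A.a_scaleR_left a_ortho_basis_pair dual_coeff_def
          if_distrib cong: if_cong)
  qed
  have r_basis: "a r (w j) = 0" if "j < N" for j
    by (rule A.a_eq_zero_on_span[OF _ adj.basis_in_span_ortho_basis[OF that]]) (use r_dual in auto)
  have "a r r = 0"
    by (rule A.a_eq_zero_on_span[OF _ r_span]) (use r_basis in auto)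
  then have "r = 0"
    by (rule A.eq_zero_if_a_self_eq_zero)
  then show ?thesis
    by (simp add: r_def)
qed

lemma dual_coeff_bessel:
  obtains K where "K \<ge> 0" "\<And>z P M. (\<Sum>n\<in>{P..<M}. (dual_coeff z n)\<^sup>2) \<le> K * (norm z)\<^sup>2"
proof -
  obtain K where K: "K \<ge> 0" "\<And>z P M. (\<Sum>n\<in>{P..<M}. (a z (adj.ortho_basis n))\<^sup>2) \<le> K * (norm z)\<^sup>2"
    using adj.ortho_basis_analysis by blast
  obtain \<rho> where \<rho>: "\<rho> > 0" "\<And>n. \<rho> \<le> rho n"
    using rho_ge by blast
  have "(\<Sum>n\<in>{P..<M}. (dual_coeff z n)\<^sup>2) \<le> (K / \<rho>\<^sup>2) * (norm z)\<^sup>2" for z P M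
  proof -
    have "(dual_coeff z n)\<^sup>2 \<le> (a z (adj.ortho_basis n))\<^sup>2 / \<rho>\<^sup>2" for n
    proof -
      have "\<rho>\<^sup>2 \<le> (rho n)\<^sup>2" "0 < rho n"
        using \<rho>(1) \<rho>(2)[of n] by (auto intro: power_mono)
      then show ?thesis
        unfolding dual_coeff_def power_divide using \<rho>(1) by (intro divide_left_mono) auto
    qed
    then have "(\<Sum>n\<in>{P..<M}. (dual_coeff z n)\<^sup>2) \<le> (\<Sum>n\<in>{P..<M}. (a z (adj.ortho_basis n))\<^sup>2) / \<rho>\<^sup>2"
      unfolding sum_divide_distrib by (rule sum_mono)
    also have "\<dots> \<le> (K * (norm z)\<^sup>2) / \<rho>\<^sup>2"
      using K(2) \<rho>(1) by (intro divide_right_mono) auto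
    finally show ?thesis by simp
  qed
  with K(1) show thesis
    by (intro that[of "K / \<rho>\<^sup>2"]) auto
qed

lemma a_galerkin_dual_eq_zero:
  assumes "A.galerkin_sequence u N U" "N k \<le> n"
  shows "a (U k) (adj.ortho_basis n) = 0"
proof -
  have "U k \<in> A.X n"
    using assms A.span_prefix_mono unfolding A.galerkin_sequence_def by blast
  then show ?thesis
    using adj.a_ortho_basis_span_prefix by simp
qed

lemma a_galerkin_dual_eq:
  assumes "A.galerkin_sequence u N U" "n < N m"
  shows "a (U m) (adj.ortho_basis n) = a u (adj.ortho_basis n)"
proof -
  have "adj.ortho_basis n \<in> A.X (N m)"
    using assms(2) by (rule adj.ortho_basis_in_span_prefix)
  then show ?thesis
    using assms(1) unfolding A.galerkin_sequence_def by blast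
qed

lemma galerkin_diff_expansion:
  assumes gal: "A.galerkin_sequence u N U" and "k \<le> m"
  shows "U m - U k = (\<Sum>n\<in>{N k..<N m}. dual_coeff u n *\<^sub>R A.ortho_basis n)"
proof -
  have N: "N k \<le> N m"
    using gal \<open>k \<le> m\<close> unfolding A.galerkin_sequence_def by (simp add: strict_mono_leD)
  have "U m - U k \<in> A.X (N m)"
    using gal A.span_prefix_mono[OF N] unfolding A.galerkin_sequence_def by (blast intro: span_diff)
  moreover have "a (U m - U k) y = 0" if "y \<in> A.X (N k)" for y
    using gal that A.span_prefix_mono[OF N] unfolding A.galerkin_sequence_def by (auto simp: A.diff_left)
  ultimately have "U m - U k = (\<Sum>n\<in>{N k..<N m}. dual_coeff (U m - U k) n *\<^sub>R A.ortho_basis n)"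
    by (rule ortho_basis_expansion_of_orthogonal[OF N])
  also have "\<dots> = (\<Sum>n\<in>{N k..<N m}. dual_coeff u n *\<^sub>R A.ortho_basis n)"
    by (intro sum.cong refl)
      (auto simp: dual_coeff_def A.diff_left a_galerkin_dual_eq_zero[OF gal] a_galerkin_dual_eq[OF gal])
  finally show ?thesis .
qed

lemma dual_coeff_galerkin_error:
  assumes "A.galerkin_sequence u N U" "N l \<le> n"
  shows "dual_coeff (u - U l) n = dual_coeff u n"
  using a_galerkin_dual_eq_zero[OF assms] by (simp add: dual_coeff_def A.diff_left)

text \<open>Both directions pass through the coefficients \<open>dual_coeff u n\<close>, which do not depend on the level:
  the synthesis bound turns them into norms of Galerkin differences, the Bessel bound back.\<close>

lemma galerkin_increment_bounds:
  obtains K where "K \<ge> 0"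
    "\<And>u N U l p. A.galerkin_sequence u N U \<Longrightarrow>
       (\<Sum>k<p. (norm (U (k + l + 1) - U (k + l)))\<^sup>2) \<le> K * (norm (u - U l))\<^sup>2"
    "\<And>u N U l p. A.galerkin_sequence u N U \<Longrightarrow>
       (norm (U (p + l) - U l))\<^sup>2 \<le> K * (\<Sum>k<p. (norm (U (k + l + 1) - U (k + l)))\<^sup>2)"
proof -
  obtain KS where KS: "KS \<ge> 0"
    "\<And>P N c. (norm (\<Sum>n\<in>{P..<N}. c n *\<^sub>R A.ortho_basis n))\<^sup>2 \<le> KS * (\<Sum>n\<in>{P..<N}. (c n)\<^sup>2)"
    using A.ortho_basis_synthesis by blast
  obtain KB where KB: "KB \<ge> 0" "\<And>z P M. (\<Sum>n\<in>{P..<M}. (dual_coeff z n)\<^sup>2) \<le> KB * (norm z)\<^sup>2"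
    using dual_coeff_bessel by blast
  have "(\<Sum>k<p. (norm (U (k + l + 1) - U (k + l)))\<^sup>2) \<le> (KS * KB) * (norm (u - U l))\<^sup>2"
    and "(norm (U (p + l) - U l))\<^sup>2 \<le> (KS * KB) * (\<Sum>k<p. (norm (U (k + l + 1) - U (k + l)))\<^sup>2)"
    if gal: "A.galerkin_sequence u N U" for u N U l p
  proof -
    have sm: "strict_mono N"
      using gal unfolding A.galerkin_sequence_def by blast
    define c where "c = dual_coeff u"
    let ?block = "\<lambda>k. {N (k + l)..<N (k + l + 1)}"
    have diff: "(norm (U m - U k))\<^sup>2 \<le> KS * (\<Sum>n\<in>{N k..<N m}. (c n)\<^sup>2)" if "k \<le> m" for k m
      unfolding galerkin_diff_expansion[OF gal that] c_def by (rule KS(2))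
    have block: "(\<Sum>n\<in>?block k. (c n)\<^sup>2) \<le> KB * (norm (U (k + l + 1) - U (k + l)))\<^sup>2" for k
    proof -
      have "(\<Sum>n\<in>?block k. (c n)\<^sup>2) = (\<Sum>n\<in>?block k. (dual_coeff (U (k + l + 1) - U (k + l)) n)\<^sup>2)"
        by (intro sum.cong refl)
          (auto simp: c_def dual_coeff_def A.diff_left a_galerkin_dual_eq_zero[OF gal] a_galerkin_dual_eq[OF gal])
      also have "\<dots> \<le> KB * (norm (U (k + l + 1) - U (k + l)))\<^sup>2"
        by (rule KB(2))
      finally show ?thesis .
    qed
    have "(\<Sum>k<p. (norm (U (k + l + 1) - U (k + l)))\<^sup>2) \<le> (\<Sum>k<p. KS * (\<Sum>n\<in>?block k. (c n)\<^sup>2))"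
      by (intro sum_mono diff) simp
    also have "\<dots> = KS * (\<Sum>n\<in>{N l..<N (p + l)}. (c n)\<^sup>2)"
      by (simp only: sum_distrib_left[symmetric] sum_strict_mono_blocks[OF sm])
    also have "\<dots> = KS * (\<Sum>n\<in>{N l..<N (p + l)}. (dual_coeff (u - U l) n)\<^sup>2)"
      by (intro arg_cong[where f="(*) KS"] sum.cong refl) (simp add: c_def dual_coeff_galerkin_error[OF gal])
    also have "\<dots> \<le> KS * (KB * (norm (u - U l))\<^sup>2)"
      using KB(2) KS(1) by (rule mult_left_mono)
    finally show "(\<Sum>k<p. (norm (U (k + l + 1) - U (k + l)))\<^sup>2) \<le> (KS * KB) * (norm (u - U l))\<^sup>2"
      by (simp add: mult.assoc)
    have "(norm (U (p + l) - U l))\<^sup>2 \<le> KS * (\<Sum>n\<in>{N l..<N (p + l)}. (c n)\<^sup>2)"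
      by (rule diff) simp
    also have "\<dots> = KS * (\<Sum>k<p. \<Sum>n\<in>?block k. (c n)\<^sup>2)"
      by (simp only: sum_strict_mono_blocks[OF sm])
    also have "\<dots> \<le> KS * (\<Sum>k<p. KB * (norm (U (k + l + 1) - U (k + l)))\<^sup>2)"
      using KS(1) by (intro mult_left_mono sum_mono block)
    finally show "(norm (U (p + l) - U l))\<^sup>2 \<le> (KS * KB) * (\<Sum>k<p. (norm (U (k + l + 1) - U (k + l)))\<^sup>2)"
      by (simp add: sum_distrib_left mult.assoc)
  qed
  with KS(1) KB(1) show thesis
    by (intro that[of "KS * KB"]) auto
qed

lemma galerkin_quasi_orthogonality:
  "\<exists>Cqo>0. \<forall>u N U l. A.galerkin_sequence u N U \<longrightarrow>
     summable (\<lambda>k. (norm (U (k + l + 1) - U (k + l)))\<^sup>2) \<and>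
     (1 / Cqo) * (norm (u - U l))\<^sup>2 \<le> (\<Sum>k. (norm (U (k + l + 1) - U (k + l)))\<^sup>2) \<and>
     (\<Sum>k. (norm (U (k + l + 1) - U (k + l)))\<^sup>2) \<le> Cqo * (norm (u - U l))\<^sup>2"
proof -
  obtain K where K: "K \<ge> 0"
    "\<And>u N U l p. A.galerkin_sequence u N U \<Longrightarrow>
       (\<Sum>k<p. (norm (U (k + l + 1) - U (k + l)))\<^sup>2) \<le> K * (norm (u - U l))\<^sup>2"
    "\<And>u N U l p. A.galerkin_sequence u N U \<Longrightarrow>
       (norm (U (p + l) - U l))\<^sup>2 \<le> K * (\<Sum>k<p. (norm (U (k + l + 1) - U (k + l)))\<^sup>2)"
    using galerkin_increment_bounds by blast
  show ?thesis
  proof (intro exI[of _ "K + 1"] conjI allI impI)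
    show "K + 1 > 0"
      using K(1) by simp
    fix u N U l
    assume gal: "A.galerkin_sequence u N U"
    define e where "e = (\<lambda>k. (norm (U (k + l + 1) - U (k + l)))\<^sup>2)"
    have e_nonneg: "0 \<le> e k" for k
      by (simp add: e_def)
    have partial: "sum e {..<p} \<le> K * (norm (u - U l))\<^sup>2" for p
      using K(2)[OF gal, where l=l and p=p] by (simp add: e_def)
    then have summable: "summable e"
      by (rule summableI_nonneg_bounded[OF e_nonneg])
    have "(\<lambda>p. U (p + l)) \<longlonglongrightarrow> u"
      using A.galerkin_sequence_tendsto[OF gal] by (rule LIMSEQ_ignore_initial_segment)
    then have "(\<lambda>p. (norm (U (p + l) - U l))\<^sup>2) \<longlonglongrightarrow> (norm (u - U l))\<^sup>2"
      by (intro tendsto_intros)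
    moreover have "(norm (U (p + l) - U l))\<^sup>2 \<le> K * suminf e" for p
    proof -
      have "sum e {..<p} \<le> suminf e"
        by (rule sum_le_suminf[OF summable]) (simp_all add: e_nonneg)
      then have "K * sum e {..<p} \<le> K * suminf e"
        using K(1) by (rule mult_left_mono)
      with K(3)[OF gal, where l=l and p=p] show ?thesis
        unfolding e_def by linarith
    qed
    ultimately have "(norm (u - U l))\<^sup>2 \<le> K * suminf e"
      using LIMSEQ_le_const2 by blast
    then have "(norm (u - U l))\<^sup>2 \<le> (K + 1) * suminf e"
      using suminf_nonneg[OF summable e_nonneg] by (simp add: distrib_right)
    moreover have "suminf e \<le> (K + 1) * (norm (u - U l))\<^sup>2"
      using suminf_le_const[OF summable partial] zero_le_power2[of "norm (u - U l)"]
      unfolding distrib_right by linarith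
    ultimately show "summable (\<lambda>k. (norm (U (k + l + 1) - U (k + l)))\<^sup>2)"
      and "(1 / (K + 1)) * (norm (u - U l))\<^sup>2 \<le> (\<Sum>k. (norm (U (k + l + 1) - U (k + l)))\<^sup>2)"
      and "(\<Sum>k. (norm (U (k + l + 1) - U (k + l)))\<^sup>2) \<le> (K + 1) * (norm (u - U l))\<^sup>2"
      using summable K(1) unfolding e_def[symmetric] by (simp_all add: field_simps)
  qed
qed

end

lemma jaffard_galerkin_pair_if_jaffard_class:
  fixes a :: "'x::real_normed_vector \<Rightarrow> 'x \<Rightarrow> real"
  assumes riesz: "riesz_basis w C" and bdd: "bounded_bilinear a" and c0pos: "c0 > 0"
    and coerc_lb: "\<forall>x. c0 * (norm x)\<^sup>2 \<le> a x x"
    and jaff: "(\<lambda>i j. a (w j) (w i)) \<in> jaffard_class"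
  obtains d \<gamma> Cg where "jaffard_galerkin_pair w C a c0 d \<gamma> Cg"
proof -
  obtain d \<gamma> where d: "nat_metric d"
    and exp_summable: "\<forall>\<epsilon>>0. (\<forall>i. summable (\<lambda>j. exp (- \<epsilon> * d i j))) \<and>
      (\<exists>B. \<forall>i. (\<Sum>j. exp (- \<epsilon> * d i j)) \<le> B)"
    and "\<gamma> > 0"
    and decay: "\<forall>\<gamma>'. 0 < \<gamma>' \<and> \<gamma>' < \<gamma> \<longrightarrow> (\<exists>Cg. \<forall>i j. \<bar>a (w j) (w i)\<bar> \<le> Cg * exp (- \<gamma>' * d i j))"
    using jaff unfolding jaffard_class_def mem_Collect_eq by blast
  obtain Cg where Cg: "\<And>i j. \<bar>a (w j) (w i)\<bar> \<le> Cg * exp (- (\<gamma> / 2) * d i j)"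
    using decay[rule_format, of "\<gamma> / 2"] \<open>\<gamma> > 0\<close> by auto
  have Cg_flip: "\<bar>a (w i) (w j)\<bar> \<le> Cg * exp (- (\<gamma> / 2) * d i j)" for i j
  proof -
    have "d j i = d i j"
      using d unfolding nat_metric_def by blast
    then show ?thesis
      using Cg[where i=j and j=i] by simp
  qed
  have coercive: "\<And>x. c0 * (norm x)\<^sup>2 \<le> a x x"
    using coerc_lb by blast
  have summable: "\<And>\<epsilon>. \<epsilon> > 0 \<Longrightarrow> (\<forall>i. summable (\<lambda>j. exp (- \<epsilon> * d i j))) \<and>
      (\<exists>B. \<forall>i. (\<Sum>j. exp (- \<epsilon> * d i j)) \<le> B)"
    using exp_summable by blast
  have "\<gamma> / 2 > 0"
    using \<open>\<gamma> > 0\<close> by simp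
  have "jaffard_galerkin w C a c0 d (\<gamma> / 2) Cg"
    by (rule jaffard_galerkin.intro[OF galerkin.intro[OF riesz_system.intro[OF riesz]
          galerkin_axioms.intro[OF bdd c0pos coercive]] jaffard_galerkin_axioms.intro[OF d summable \<open>\<gamma> / 2 > 0\<close> Cg]])
  moreover have "jaffard_galerkin w C (\<lambda>x y. a y x) c0 d (\<gamma> / 2) Cg"
    by (rule jaffard_galerkin.intro[OF galerkin.intro[OF riesz_system.intro[OF riesz]
          galerkin_axioms.intro[OF bounded_bilinear.flip[OF bdd] c0pos coercive]]
          jaffard_galerkin_axioms.intro[OF d summable \<open>\<gamma> / 2 > 0\<close> Cg_flip]])
  ultimately show thesis
    by (intro that jaffard_galerkin_pair.intro)
qed

theorem theorem3p12:
  fixes a :: "'x::{real_inner, complete_space} \<Rightarrow> 'x \<Rightarrow> real"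
    and w :: "nat \<Rightarrow> 'x" and C c0 :: real
  assumes sep: "separable_space (euclidean :: 'x topology)"
    and bdd: "bounded_bilinear a"
    and c0pos: "c0 > 0"
    and coerc_lb: "\<forall>x. c0 * (norm x)\<^sup>2 \<le> a x x"
    and coerc: "(INF x\<in>UNIV - {0}. a x x / (norm x)\<^sup>2) = c0"
    and riesz: "riesz_basis w C"
    and jaff: "(\<lambda>i j. a (w j) (w i)) \<in> jaffard_class"
  shows "\<exists>Cqo>0. \<forall>(f :: 'x \<Rightarrow> real) u (N :: nat \<Rightarrow> nat) U.
     bounded_linear f \<and> (\<forall>v. a u v = f v) \<and> strict_mono N \<and>
     (\<forall>l. U l \<in> span (w ` {..<N l}) \<and> (\<forall>v\<in>span (w ` {..<N l}). a (U l) v = f v))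
     \<longrightarrow> (\<forall>l. summable (\<lambda>k. (norm (U (k + l + 1) - U (k + l)))\<^sup>2) \<and>
           (1 / Cqo) * (norm (u - U l))\<^sup>2 \<le> (\<Sum>k. (norm (U (k + l + 1) - U (k + l)))\<^sup>2) \<and>
           (\<Sum>k. (norm (U (k + l + 1) - U (k + l)))\<^sup>2) \<le> Cqo * (norm (u - U l))\<^sup>2)"
proof -
  obtain d \<gamma> Cg where "jaffard_galerkin_pair w C a c0 d \<gamma> Cg"
    using jaffard_galerkin_pair_if_jaffard_class[OF riesz bdd c0pos coerc_lb jaff] by blast
  then interpret jaffard_galerkin_pair w C a c0 d \<gamma> Cg .
  obtain Cqo where "Cqo > 0" and quasi_orthogonal: "\<forall>u N U l. A.galerkin_sequence u N U \<longrightarrow>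
     summable (\<lambda>k. (norm (U (k + l + 1) - U (k + l)))\<^sup>2) \<and>
     (1 / Cqo) * (norm (u - U l))\<^sup>2 \<le> (\<Sum>k. (norm (U (k + l + 1) - U (k + l)))\<^sup>2) \<and>
     (\<Sum>k. (norm (U (k + l + 1) - U (k + l)))\<^sup>2) \<le> Cqo * (norm (u - U l))\<^sup>2"
    using galerkin_quasi_orthogonality by blast
  show ?thesis
  proof (intro exI[of _ Cqo] conjI[OF \<open>Cqo > 0\<close>] allI impI)
    fix f u and N :: "nat \<Rightarrow> nat" and U l
    assume "bounded_linear f \<and> (\<forall>v. a u v = f v) \<and> strict_mono N \<and>
      (\<forall>l. U l \<in> span (w ` {..<N l}) \<and> (\<forall>v\<in>span (w ` {..<N l}). a (U l) v = f v))"
    then have "A.galerkin_sequence u N U"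
      unfolding A.galerkin_sequence_def by auto
    then show "summable (\<lambda>k. (norm (U (k + l + 1) - U (k + l)))\<^sup>2) \<and>
       (1 / Cqo) * (norm (u - U l))\<^sup>2 \<le> (\<Sum>k. (norm (U (k + l + 1) - U (k + l)))\<^sup>2) \<and>
       (\<Sum>k. (norm (U (k + l + 1) - U (k + l)))\<^sup>2) \<le> Cqo * (norm (u - U l))\<^sup>2"
      using quasi_orthogonal by blast
  qed
qed

end
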